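(* The function $h$ satisfies $h(1)=0$, $h(2)=1$, and $h(n)=h\left(2^{\lceil\log_2 n\rceil}-n\right)+1$ for every integer $n>2$.
   Context: For $k\ge0$ and $0\le m<2^k$ let $\beta_k(m)\in\{0,1\}^k$ be the point whose $j$-th coordinate is the binary digit of $m$ of weight $2^{k-j}$. For $n\ge2$ with $k=\lceil\log_2 n\rceil$, a pair $(n_0,n_1)$ of integers with $n=n_0+n_1$, $n_0\ge n_1\ge1$ is a hypercubic bipartition (HCBP) of $n$ if for some $i\in\{1,\dots,k\}$ the hyperplane $x_i=1/2$ splits the points $\beta_k(0),\dots,\beta_k(n-1)$ into $n_0$ points on one side and $n_1$ on the other. For $n\ge 2$, $h(n)$ denotes the number of HCBPs of $n$; by convention $h(1)=0$ and $h(0)=0$. *)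

theory Defs
  imports Complex_Main
begin

text \<open>The point beta_k(m) in {0,1}^k, as a function of the coordinate index j (1 <= j <= k):
  its j-th coordinate is the binary digit of m of weight 2^(k-j).\<close>
definition beta :: "nat \<Rightarrow> nat \<Rightarrow> nat \<Rightarrow> real" where
  "beta k m j = real ((m div 2 ^ (k - j)) mod 2)"

definition hc_dim :: "nat \<Rightarrow> nat" where
  "hc_dim n = nat \<lceil>log 2 (real n)\<rceil>"

definition below :: "nat \<Rightarrow> nat \<Rightarrow> nat" where
  "below n i = card {m. m < n \<and> beta (hc_dim n) m i < 1/2}"

definition above :: "nat \<Rightarrow> nat \<Rightarrow> nat" where
  "above n i = card {m. m < n \<and> beta (hc_dim n) m i > 1/2}"

definition HCBP :: "nat \<Rightarrow> (nat \<times> nat) set" where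
  "HCBP n = {(n0, n1). n = n0 + n1 \<and> n0 \<ge> n1 \<and> n1 \<ge> 1 \<and>
      (\<exists>i\<in>{1..hc_dim n}. (below n i = n0 \<and> above n i = n1) \<or> (below n i = n1 \<and> above n i = n0))}"

definition h :: "nat \<Rightarrow> nat" where
  "h n = (if n < 2 then 0 else card (HCBP n))"

end

theory Submission
  imports Defs
begin

text \<open>
  Coordinate \<open>i\<close> of \<open>\<beta>\<^sub>k(m)\<close> is binary digit \<open>k - i\<close> of \<open>m\<close>, so an HCBP of \<open>n\<close> is the split of
  \<open>{0..<n}\<close> by one of the digits \<open>d < k\<close>, and for \<open>n \<ge> 2\<close> each of these splits is proper.
  The complement \<open>m \<mapsto> 2\<^sup>k - 1 - m\<close> flips every such digit and maps \<open>{n..<2\<^sup>k}\<close> onto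
  \<open>{0..<2\<^sup>k - n}\<close>; since every digit \<open>d < k\<close> splits \<open>{0..<2\<^sup>k}\<close> into two halves, the split
  \<open>(a, b)\<close> of \<open>n\<close> by digit \<open>d\<close> corresponds to the split \<open>(2\<^sup>k\<^sup>-\<^sup>1 - b, 2\<^sup>k\<^sup>-\<^sup>1 - a)\<close> of
  \<open>2\<^sup>k - n\<close>. The digits \<open>d < k\<close> of \<open>2\<^sup>k - n < 2\<^sup>k\<^sup>-\<^sup>1\<close> produce its \<open>h(2\<^sup>k - n)\<close> proper splits
  together with the trivial split \<open>(2\<^sup>k - n, 0)\<close>, which gives the extra \<open>+1\<close>.
\<close>

definition binary_digit :: "nat \<Rightarrow> nat \<Rightarrow> nat" where
  "binary_digit d m = m div 2 ^ d mod 2"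

definition digit_count :: "nat \<Rightarrow> nat \<Rightarrow> nat" where
  "digit_count n d = (\<Sum>m<n. binary_digit d m)"

definition digit_split :: "nat \<Rightarrow> nat \<Rightarrow> nat \<times> nat" where
  "digit_split n d =
     (let c = digit_count n d in (max (n - c) c, min (n - c) c))"

lemma binary_digit_le_1: "binary_digit d m \<le> 1"
  by (simp add: binary_digit_def)

lemma binary_digit_cases: "binary_digit d m = 0 \<or> binary_digit d m = 1"
  by (auto simp: binary_digit_def)

lemma binary_digit_complement:
  assumes "d < k" "m < 2 ^ k"
  shows "binary_digit d (2 ^ k - 1 - m) = 1 - binary_digit d m"
proof -
  define q r T where "q = m div 2 ^ d" and "r = m mod 2 ^ d" and "T = (2::nat) ^ (k - d)"
  have pow: "(2::nat) ^ k = T * 2 ^ d"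
    using assms(1) by (simp add: T_def flip: power_add)
  have m: "m = q * 2 ^ d + r" and r: "r < 2 ^ d"
    by (simp_all add: q_def r_def div_mult_mod_eq)
  have q: "q < T"
    using assms(2) by (simp add: q_def pow less_mult_imp_div_less)
  define s where "s = 2 ^ d - 1 - r"
  have "2 ^ k - 1 - m = (T - 1 - q) * 2 ^ d + s"
  proof -
    obtain a where a: "T = Suc (q + a)"
      using q less_iff_Suc_add by blast
    have "T * 2 ^ d = q * 2 ^ d + a * 2 ^ d + 2 ^ d"
      by (simp add: a algebra_simps)
    then show ?thesis
      using r by (simp add: pow m a s_def)
  qed
  moreover have "s < 2 ^ d"
    by (simp add: s_def)
  ultimately have "(2 ^ k - 1 - m) div 2 ^ d = T - 1 - q"
    by simp
  moreover have "(T - 1 - q) mod 2 = 1 - q mod 2"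
  proof -
    have "even (T - 1 - q) \<longleftrightarrow> odd q"
      using q assms(1) by (simp add: T_def even_diff_nat)
    then show ?thesis
      by (auto simp: mod2_eq_if)
  qed
  ultimately show ?thesis
    by (simp add: binary_digit_def q_def)
qed

lemma digit_count_le: "digit_count n d \<le> n"
proof -
  have "digit_count n d \<le> (\<Sum>m<n. 1)"
    unfolding digit_count_def by (intro sum_mono binary_digit_le_1)
  then show ?thesis
    by simp
qed

lemma card_digit_eq_1: "card {m. m < n \<and> binary_digit d m = 1} = digit_count n d"
proof -
  have "digit_count n d = (\<Sum>m<n. if binary_digit d m = 1 then 1 else 0)"
    unfolding digit_count_def using binary_digit_cases by (intro sum.cong) auto
  also have "\<dots> = card {m. m < n \<and> binary_digit d m = 1}"
    by (simp add: sum.If_cases lessThan_def Collect_conj_eq)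
  finally show ?thesis ..
qed

lemma card_digit_eq_0: "card {m. m < n \<and> binary_digit d m = 0} = n - digit_count n d"
proof -
  have "{m. m < n \<and> binary_digit d m = 0} = {..<n} - {m. m < n \<and> binary_digit d m = 1}"
    using binary_digit_cases by auto
  also have "card \<dots> = card {..<n} - card {m. m < n \<and> binary_digit d m = 1}"
    by (rule card_Diff_subset) auto
  finally show ?thesis
    by (metis card_digit_eq_1 card_lessThan)
qed

lemma digit_count_top_segment:
  assumes "d < k" "j \<le> 2 ^ k"
  shows "digit_count (2 ^ k) d = digit_count (2 ^ k - j) d + (j - digit_count j d)"
proof -
  have "(\<Sum>m\<in>{2 ^ k - j..<2 ^ k}. binary_digit d m) = (\<Sum>i<j. binary_digit d (2 ^ k - 1 - i))"
    by (rule sum.reindex_bij_witness[of _ "\<lambda>i. 2 ^ k - 1 - i" "\<lambda>m. 2 ^ k - 1 - m"])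
       (use assms(2) in auto)
  also have "\<dots> = (\<Sum>i<j. 1 - binary_digit d i)"
    by (intro sum.cong refl binary_digit_complement assms(1)) (use assms(2) in auto)
  also have "\<dots> = j - digit_count j d"
    using binary_digit_le_1 by (subst sum_subtractf_nat) (auto simp: digit_count_def)
  finally show ?thesis
    using sum.atLeastLessThan_concat[of 0 "2 ^ k - j" "2 ^ k" "binary_digit d"]
    by (simp add: digit_count_def atLeast0LessThan)
qed

lemma digit_count_power:
  assumes "d < k"
  shows "digit_count (2 ^ k) d = 2 ^ (k - 1)"
proof -
  have "digit_count 0 d = 0"
    by (simp add: digit_count_def)
  then have "2 * digit_count (2 ^ k) d = 2 ^ k"
    using digit_count_top_segment[OF assms order_refl] digit_count_le[of "2 ^ k" d] by simp
  moreover have "(2::nat) ^ k = 2 * 2 ^ (k - 1)"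
    using assms by (simp flip: power_Suc)
  ultimately show ?thesis
    by simp
qed

lemma digit_count_complement:
  assumes "d < k" "n \<le> 2 ^ k"
  shows "digit_count n d + ((2 ^ k - n) - digit_count (2 ^ k - n) d) = 2 ^ (k - 1)"
  using digit_count_top_segment[OF assms(1), of "2 ^ k - n"] assms digit_count_power[OF assms(1)]
  by simp

lemma digit_split_le: "fst (digit_split n d) \<le> n" "snd (digit_split n d) \<le> n"
  using digit_count_le[of n d] by (auto simp: digit_split_def Let_def)

lemma digit_split_small:
  assumes "n \<le> 2 ^ d"
  shows "digit_split n d = (n, 0)"
proof -
  have "digit_count n d = 0"
    using assms by (auto simp: digit_count_def binary_digit_def intro!: sum.neutral)
  then show ?thesis
    by (simp add: digit_split_def)
qed

lemma digit_split_snd_pos: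
  assumes "2 ^ d < n"
  shows "0 < snd (digit_split n d)"
proof -
  have "2 ^ d \<in> {m. m < n \<and> binary_digit d m = 1}" "0 \<in> {m. m < n \<and> binary_digit d m = 0}"
    using assms by (auto simp: binary_digit_def)
  then have "0 < card {m. m < n \<and> binary_digit d m = 1}" "0 < card {m. m < n \<and> binary_digit d m = 0}"
    by (auto simp only: card_gt_0_iff finite_Collect_conjI finite_Collect_less_nat)
  then have "0 < digit_count n d" "0 < n - digit_count n d"
    by (simp_all only: card_digit_eq_1 card_digit_eq_0)
  then show ?thesis
    by (simp add: digit_split_def Let_def)
qed

lemma digit_split_complement:
  assumes "d < k" "n \<le> 2 ^ k"
  shows "digit_split n d =
    (2 ^ (k - 1) - snd (digit_split (2 ^ k - n) d), 2 ^ (k - 1) - fst (digit_split (2 ^ k - n) d))"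
proof -
  define K m where "K = (2::nat) ^ (k - 1)" and "m = 2 ^ k - n"
  have "n + m = 2 * K"
    using assms by (simp add: K_def m_def flip: power_Suc)
  moreover have "digit_count n d + (m - digit_count m d) = K"
    using digit_count_complement[OF assms] by (simp add: K_def m_def)
  moreover have "digit_count n d \<le> n" "digit_count m d \<le> m"
    by (rule digit_count_le)+
  ultimately show ?thesis
    unfolding K_def[symmetric] m_def[symmetric] digit_split_def Let_def
    by (auto simp: max_def min_def)
qed

lemma less_hc_dim_iff: "d < hc_dim n \<longleftrightarrow> 2 ^ d < n"
proof (cases "n = 0")
  case True
  then show ?thesis
    by (simp add: hc_dim_def log_def)
next
  case False
  have "d < hc_dim n \<longleftrightarrow> real d < log 2 (real n)"
    by (simp add: hc_dim_def less_ceiling_iff zless_nat_eq_int_zless)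
  also have "\<dots> \<longleftrightarrow> 2 ^ d < n"
    using False by (simp add: less_log_iff powr_realpow)
  finally show ?thesis .
qed

lemma hc_dim_bounds:
  assumes "2 \<le> n"
  shows "0 < hc_dim n" "n \<le> 2 ^ hc_dim n"
  using assms less_hc_dim_iff[of 0 n] less_hc_dim_iff[of "hc_dim n" n] by auto

lemma beta_eq_binary_digit: "beta k m i = real (binary_digit (k - i) m)"
  by (simp add: beta_def binary_digit_def)

lemma below_eq: "below n i = n - digit_count n (hc_dim n - i)"
proof -
  have "beta (hc_dim n) m i < 1/2 \<longleftrightarrow> binary_digit (hc_dim n - i) m = 0" for m
    using binary_digit_cases[of "hc_dim n - i" m] by (auto simp: beta_eq_binary_digit)
  then have "{m. m < n \<and> beta (hc_dim n) m i < 1/2} = {m. m < n \<and> binary_digit (hc_dim n - i) m = 0}"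
    by blast
  then show ?thesis
    by (simp add: below_def card_digit_eq_0)
qed

lemma above_eq: "above n i = digit_count n (hc_dim n - i)"
proof -
  have "beta (hc_dim n) m i > 1/2 \<longleftrightarrow> binary_digit (hc_dim n - i) m = 1" for m
    using binary_digit_cases[of "hc_dim n - i" m] by (auto simp: beta_eq_binary_digit)
  then have "{m. m < n \<and> beta (hc_dim n) m i > 1/2} = {m. m < n \<and> binary_digit (hc_dim n - i) m = 1}"
    by blast
  then show ?thesis
    unfolding above_def card_digit_eq_1[symmetric] by simp
qed

lemma digit_split_eq_iff:
  "digit_split n d = (a, b) \<longleftrightarrow>
     n = a + b \<and> b \<le> a \<and> (digit_count n d = a \<or> digit_count n d = b)"
  using digit_count_le[of n d] by (auto simp: digit_split_def Let_def max_def min_def)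

lemma HCBP_eq_digit_splits: "HCBP n = digit_split n ` {d. 2 ^ d < n}"
proof (intro set_eqI iffI)
  fix p assume "p \<in> HCBP n"
  then obtain n0 n1 i where p: "p = (n0, n1)" and "n = n0 + n1" "n1 \<le> n0"
    and i: "i \<in> {1..hc_dim n}"
    and "(below n i = n0 \<and> above n i = n1) \<or> (below n i = n1 \<and> above n i = n0)"
    unfolding HCBP_def by blast
  then have "digit_split n (hc_dim n - i) = p"
    by (auto simp: digit_split_eq_iff below_eq above_eq)
  moreover have "2 ^ (hc_dim n - i) < n"
    using i by (simp add: less_hc_dim_iff[symmetric])
  ultimately show "p \<in> digit_split n ` {d. 2 ^ d < n}"
    by force
next
  fix p assume "p \<in> digit_split n ` {d. 2 ^ d < n}"
  then obtain d where d: "2 ^ d < n" and p: "p = digit_split n d"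
    by blast
  obtain a b where ab: "p = (a, b)"
    by fastforce
  then have "n = a + b" "b \<le> a" and c: "digit_count n d = a \<or> digit_count n d = b"
    using p digit_split_eq_iff by auto
  have "0 < b"
    using digit_split_snd_pos[OF d] by (metis p ab snd_conv)
  define i where "i = hc_dim n - d"
  have "d < hc_dim n"
    using d by (simp add: less_hc_dim_iff)
  then have i: "i \<in> {1..hc_dim n}" and "hc_dim n - i = d"
    by (auto simp: i_def)
  then have "(below n i = a \<and> above n i = b) \<or> (below n i = b \<and> above n i = a)"
    using c \<open>n = a + b\<close> by (auto simp: below_eq above_eq)
  then show "p \<in> HCBP n"
    unfolding HCBP_def ab using i \<open>n = a + b\<close> \<open>b \<le> a\<close> \<open>0 < b\<close> by auto
qed

lemma h_eq_card_digit_splits: "h n = card (digit_split n ` {d. 2 ^ d < n})"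
proof (cases "n < 2")
  case True
  then have "{d. 2 ^ d < n} = {}"
    by (auto simp: less_2_cases_iff)
  with True show ?thesis
    by (simp add: h_def)
qed (simp add: h_def HCBP_eq_digit_splits)

lemma card_digit_splits_beyond:
  assumes "d < k" "m \<le> 2 ^ d"
  shows "card (digit_split m ` {..<k}) = h m + 1"
proof -
  have "d' < d" if "2 ^ d' < m" for d'
  proof -
    have "(2::nat) ^ d' < 2 ^ d"
      using that assms(2) by linarith
    then show ?thesis
      by simp
  qed
  then have split: "{..<k} = {d'. 2 ^ d' < m} \<union> {d'. d' < k \<and> m \<le> 2 ^ d'}"
    using assms(1) by (auto simp: not_less dest: less_trans)
  then have "finite {d'. 2 ^ d' < m}"
    by (metis finite_Un finite_lessThan)
  moreover note split
  moreover have "digit_split m ` {d'. d' < k \<and> m \<le> 2 ^ d'} = {(m, 0)}"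
    using assms by (auto simp: digit_split_small)
  moreover have "(m, 0) \<notin> digit_split m ` {d'. 2 ^ d' < m}"
  proof
    assume "(m, 0) \<in> digit_split m ` {d'. 2 ^ d' < m}"
    then obtain d' where "2 ^ d' < m" "digit_split m d' = (m, 0)"
      by auto
    then show False
      using digit_split_snd_pos by fastforce
  qed
  ultimately show ?thesis
    by (simp add: image_Un h_eq_card_digit_splits)
qed

lemma h_recursion:
  assumes "2 \<le> n"
  shows "h n = h (2 ^ hc_dim n - n) + 1"
proof -
  define k K m where "k = hc_dim n" and "K = (2::nat) ^ (k - 1)" and "m = 2 ^ k - n"
  have k: "0 < k" "n \<le> 2 ^ k" "2 ^ (k - 1) < n"
    using hc_dim_bounds[OF assms] less_hc_dim_iff[of "k - 1" n] by (simp_all add: k_def)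
  have "m \<le> K"
  proof -
    have "(2::nat) ^ k = 2 * K"
      using k(1) by (simp add: K_def flip: power_Suc)
    moreover have "K < n"
      using k(3) by (simp add: K_def)
    ultimately show ?thesis
      unfolding m_def by linarith
  qed
  define flip where "flip = (\<lambda>(a, b). (K - b, K - a :: nat))"
  have "{d. 2 ^ d < n} = {..<k}"
    by (auto simp: k_def less_hc_dim_iff)
  then have "h n = card (digit_split n ` {..<k})"
    by (simp add: h_eq_card_digit_splits)
  also have "digit_split n ` {..<k} = flip ` digit_split m ` {..<k}"
    unfolding image_image
  proof (rule image_cong[OF refl])
    fix d assume "d \<in> {..<k}"
    then show "digit_split n d = flip (digit_split m d)"
      using digit_split_complement[of d k n] k by (simp add: flip_def K_def m_def split_beta)
  qed
  also have "card \<dots> = card (digit_split m ` {..<k})"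
  proof (rule card_image, rule inj_onI)
    have bound: "fst p \<le> K \<and> snd p \<le> K" if "p \<in> digit_split m ` {..<k}" for p
      using that \<open>m \<le> K\<close>
      by (auto intro: order_trans[OF digit_split_le(1)] order_trans[OF digit_split_le(2)])
    fix p q assume p: "p \<in> digit_split m ` {..<k}" and q: "q \<in> digit_split m ` {..<k}"
      and "flip p = flip q"
    with bound[OF p] bound[OF q] show "p = q"
      by (simp add: flip_def split_beta prod_eq_iff) linarith
  qed
  also have "\<dots> = h m + 1"
    using k \<open>m \<le> K\<close> by (intro card_digit_splits_beyond[of "k - 1"]) (simp_all add: K_def)
  finally show ?thesis
    by (simp add: m_def k_def)
qed

theorem corollary16:
  shows "h 1 = 0 \<and> h 2 = 1 \<and>
    (\<forall>n::nat. n > 2 \<longrightarrow> h n = h (2 ^ nat \<lceil>log 2 (real n)\<rceil> - n) + 1)"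
proof (intro conjI allI impI)
  show "h 1 = 0"
    by (simp add: h_def)
  have "hc_dim 2 = 1"
    by (simp add: hc_dim_def)
  moreover have "h 0 = 0"
    by (simp add: h_def)
  ultimately show "h 2 = 1"
    using h_recursion[of 2] by simp
  fix n :: nat
  assume "n > 2"
  then show "h n = h (2 ^ nat \<lceil>log 2 (real n)\<rceil> - n) + 1"
    using h_recursion[of n] by (simp add: hc_dim_def)
qed

end
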